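(* Let $n\ge1$ and for $a_0,\dots,a_n\in[0,1]$ and $p\in[0,1]$ put $$D(a_0,\dots,a_n;p)=\sum_{k=0}^n\binom{n}{k}p^k(1-p)^{n-k}|p-a_k|.$$ Suppose $(a_0,\dots,a_n)\in[0,1]^{n+1}$ minimizes $\max_{p\in[0,1]}D(x_0,\dots,x_n;p)$ over all $(x_0,\dots,x_n)\in[0,1]^{n+1}$, and let $f(p)=D(a_0,\dots,a_n;p)$ and $M(f)=\{x\in[0,1]: f(x)=\max_{[0,1]}f\}$. Then $a_0<a_1<\cdots<a_n$, and $M(f)\cap(a_i,a_{i+1})\neq\emptyset$ for every $i=0,\dots,n-1$. *)

theory Defs
  imports "HOL-Analysis.Analysis"
begin

definition D :: "nat \<Rightarrow> (nat \<Rightarrow> real) \<Rightarrow> real \<Rightarrow> real" where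
  "D n a p = (\<Sum>k=0..n. real (n choose k) * p ^ k * (1 - p) ^ (n - k) * \<bar>p - a k\<bar>)"

definition maxD :: "nat \<Rightarrow> (nat \<Rightarrow> real) \<Rightarrow> real" where
  "maxD n a = (SUP p\<in>{0..1}. D n a p)"

definition maxset :: "nat \<Rightarrow> (nat \<Rightarrow> real) \<Rightarrow> real set" where
  "maxset n a = {x \<in> {0..1}. D n a x = maxD n a}"

end

theory Submission
  imports Defs
begin

text \<open>Suppose no maximum point of \<open>f\<close> lies in \<open>(a i, a (Suc i))\<close>. Lowering \<open>a i\<close> and raising
  \<open>a (Suc i)\<close>, corrected slightly at \<open>a 0\<close> and \<open>a n\<close> for maxima at the endpoints, gives a
  direction \<open>t\<close> along which \<open>D(a + d t; q)\<close> strictly decreases at every maximum point \<open>q\<close>. At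
  interior maximum points this is a first-order computation, valid because they are never nodes:
  at a node \<open>D\<close> has an upward kink \<open>\<bar>p - q\<bar> * B p\<close> with \<open>B q > 0\<close>, which no maximum can
  have. Convexity of \<open>D\<close> in \<open>a\<close> and compactness of \<open>[0, 1]\<close> make the decrease uniform in
  \<open>p\<close>, and clipping to \<open>[0, 1]\<close> yields an admissible \<open>x\<close> with \<open>maxD n x < maxD n a\<close>. The
  ordering \<open>a i < a (Suc i)\<close> follows since the interval must be nonempty.\<close>

lemma D_Bernstein: "D n a p = (\<Sum>k\<le>n. Bernstein n k p * \<bar>p - a k\<bar>)"
  by (simp add: D_def Bernstein_def atLeast0AtMost)

lemma D_nonneg: "p \<in> {0..1} \<Longrightarrow> 0 \<le> D n a p"
  unfolding D_Bernstein by (intro sum_nonneg mult_nonneg_nonneg Bernstein_nonneg) auto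

lemma Bernstein_mult_abs_le_D:
  assumes "p \<in> {0..1}" "k \<le> n"
  shows "Bernstein n k p * \<bar>p - a k\<bar> \<le> D n a p"
  unfolding D_Bernstein
  by (rule member_le_sum) (use assms in \<open>auto intro!: mult_nonneg_nonneg Bernstein_nonneg\<close>)

lemma continuous_on_D: "continuous_on S (D n a)"
  unfolding D_def by (intro continuous_intros)

lemma D_at_0: "D n a 0 = \<bar>a 0\<bar>"
proof -
  have "D n a 0 = (\<Sum>k\<le>n. if k = 0 then \<bar>a k\<bar> else 0)"
    unfolding D_Bernstein Bernstein_def by (intro sum.cong) auto
  then show ?thesis
    by simp
qed

lemma D_at_1: "D n a 1 = \<bar>1 - a n\<bar>"
proof -
  have "D n a 1 = (\<Sum>k\<le>n. if k = n then \<bar>1 - a k\<bar> else 0)"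
    unfolding D_Bernstein Bernstein_def by (intro sum.cong) auto
  then show ?thesis
    by simp
qed

lemma maxD_attained: "\<exists>p\<in>{0..1}. D n a p = maxD n a \<and> (\<forall>p'\<in>{0..1}. D n a p' \<le> D n a p)"
proof -
  obtain p where p: "p \<in> {0..1}" "\<forall>p'\<in>{0..1}. D n a p' \<le> D n a p"
    using continuous_attains_sup[OF compact_Icc _ continuous_on_D, of 0 1 n a] by auto
  have "maxD n a = D n a p"
    unfolding maxD_def by (rule cSup_eq_maximum) (use p in auto)
  with p show ?thesis
    by auto
qed

lemma D_le_maxD: "p \<in> {0..1} \<Longrightarrow> D n a p \<le> maxD n a"
  using maxD_attained[of n a] by auto

lemma maxD_pos: "0 < maxD n a"
proof (rule ccontr)
  assume "\<not> 0 < maxD n a"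
  then have "D n a p = 0" if "p \<in> {0..1}" for p
    using D_nonneg[OF that, of n a] D_le_maxD[OF that, of n a] by linarith
  then have "a 0 = p" if "0 < p" "p < 1" for p
    using Bernstein_mult_abs_le_D[of p 0 n a] Bernstein_pos[OF that, of 0 n] that
    by (auto simp: mult_le_0_iff)
  from this[of "1/2"] this[of "1/3"] show False
    by simp
qed

lemma closed_maxset: "closed (maxset n a)"
  unfolding maxset_def
  by (rule continuous_closed_preimage_constant[OF continuous_on_D closed_atLeastAtMost])

lemma D_convex:
  assumes "l \<in> {0..1}" "p \<in> {0..1}"
  shows "D n (\<lambda>k. (1 - l) * x k + l * y k) p \<le> (1 - l) * D n x p + l * D n y p"
proof -
  have "Bernstein n k p * \<bar>p - ((1 - l) * x k + l * y k)\<bar>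
      \<le> (1 - l) * (Bernstein n k p * \<bar>p - x k\<bar>) + l * (Bernstein n k p * \<bar>p - y k\<bar>)" for k
  proof -
    have "\<bar>p - ((1 - l) * x k + l * y k)\<bar> = \<bar>(1 - l) * (p - x k) + l * (p - y k)\<bar>"
      by (simp add: algebra_simps)
    also have "\<dots> \<le> (1 - l) * \<bar>p - x k\<bar> + l * \<bar>p - y k\<bar>"
      using abs_triangle_ineq[of "(1 - l) * (p - x k)" "l * (p - y k)"] assms
      by (simp add: abs_mult)
    finally show ?thesis
      using mult_left_mono[OF _ Bernstein_nonneg] assms by (fastforce simp: algebra_simps)
  qed
  then show ?thesis
    unfolding D_Bernstein sum_distrib_left sum.distrib[symmetric] by (rule sum_mono)
qed

lemma D_clamp_le: "p \<in> {0..1} \<Longrightarrow> D n (\<lambda>k. max 0 (min 1 (x k))) p \<le> D n x p"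
  unfolding D_Bernstein by (intro sum_mono mult_left_mono Bernstein_nonneg) auto

lemma D_descent_shrink:
  assumes "p \<in> {0..1}" "D n a p \<le> m" "D n (\<lambda>k. a k + d * t k) p < m" "0 < d'" "d' \<le> d"
  shows "D n (\<lambda>k. a k + d' * t k) p < m"
proof -
  define l where "l = d' / d"
  have l: "l \<in> {0..1}" "0 < l"
    using assms(4,5) by (auto simp: l_def)
  have "(\<lambda>k. a k + d' * t k) = (\<lambda>k. (1 - l) * a k + l * (a k + d * t k))"
    using assms(4,5) by (auto simp: l_def field_simps)
  then have "D n (\<lambda>k. a k + d' * t k) p \<le> (1 - l) * D n a p + l * D n (\<lambda>k. a k + d * t k) p"
    using D_convex[OF l(1) assms(1)] by simp
  also have "\<dots> < (1 - l) * m + l * m"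
    using assms(2,3) l by (intro add_le_less_mono mult_left_mono mult_strict_left_mono) auto
  finally show ?thesis
    by (simp add: algebra_simps)
qed

lemma uniform_descent:
  assumes descent: "\<forall>q\<in>maxset n a. \<exists>d>0. D n (\<lambda>k. a k + d * t k) q < maxD n a"
  shows "\<exists>d>0. \<forall>p\<in>{0..1}. D n (\<lambda>k. a k + d * t k) p < maxD n a"
proof (rule ccontr)
  \<comment> \<open>By convexity the compact sets \<open>K d\<close> shrink with \<open>d\<close>; a common point is a maximum point
    at which no descent is possible.\<close>
  define K where "K d = {p \<in> {0..1}. maxD n a \<le> D n (\<lambda>k. a k + d * t k) p}" for d
  assume "\<not> ?thesis"
  then have K_ne: "K d \<noteq> {}" if "0 < d" for d
    using that by (force simp: K_def not_less)
  have K_mono: "K d' \<subseteq> K d" if "0 < d'" "d' \<le> d" for d d'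
    using D_descent_shrink[of _ n a "maxD n a" d t d'] D_le_maxD that by (force simp: K_def not_le)
  have K_compact: "compact (K d)" for d
  proof -
    have "closed {p. maxD n a \<le> D n (\<lambda>k. a k + d * t k) p}"
      by (intro closed_Collect_le continuous_intros continuous_on_D)
    moreover have "K d = {0..1} \<inter> {p. maxD n a \<le> D n (\<lambda>k. a k + d * t k) p}"
      by (auto simp: K_def)
    ultimately show ?thesis
      using compact_Int_closed[OF compact_Icc] by metis
  qed
  have "\<Inter>(range (\<lambda>s. K (exp (- s)))) \<noteq> {}"
    by (rule compact_nest) (use K_compact K_ne K_mono in auto)
  then obtain q where "\<And>s. q \<in> K (exp (- s))"
    by blast
  then have q: "q \<in> K d" if "0 < d" for d
    using that by (metis exp_ln minus_minus)
  have "isCont (\<lambda>d. D n (\<lambda>k. a k + d * t k) q) 0"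
    unfolding D_def by (intro continuous_intros)
  then have "((\<lambda>d. D n (\<lambda>k. a k + d * t k) q) \<longlongrightarrow> D n a q) (at_right 0)"
    unfolding isCont_def filterlim_at_split by simp
  moreover have "\<forall>\<^sub>F d in at_right 0. maxD n a \<le> D n (\<lambda>k. a k + d * t k) q"
    using eventually_at_right_less[of "0::real"] by eventually_elim (use q in \<open>auto simp: K_def\<close>)
  ultimately have "maxD n a \<le> D n a q"
    by (intro tendsto_lowerbound) auto
  then have "q \<in> maxset n a"
    using q[of 1] D_le_maxD[of q n a] by (auto simp: maxset_def K_def)
  then obtain d where "0 < d" "D n (\<lambda>k. a k + d * t k) q < maxD n a"
    using descent by blast
  with q[of d] show False
    by (auto simp: K_def)
qed

lemma not_minimal_if_descent:
  assumes "\<forall>q\<in>maxset n a. \<exists>d>0. D n (\<lambda>k. a k + d * t k) q < maxD n a"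
  obtains x where "\<forall>k\<le>n. x k \<in> {0..1}" "maxD n x < maxD n a"
proof -
  obtain d where d: "\<forall>p\<in>{0..1}. D n (\<lambda>k. a k + d * t k) p < maxD n a"
    using uniform_descent[OF assms] by blast
  define x where "x k = max 0 (min 1 (a k + d * t k))" for k
  obtain p where p: "p \<in> {0..1}" "D n x p = maxD n x"
    using maxD_attained[of n x] by blast
  have "D n x p \<le> D n (\<lambda>k. a k + d * t k) p"
    unfolding x_def by (rule D_clamp_le[OF p(1)])
  with d p have "maxD n x < maxD n a"
    by fastforce
  moreover have "\<forall>k\<le>n. x k \<in> {0..1}"
    by (auto simp: x_def)
  ultimately show thesis
    using that by blast
qed

lemma eventually_sgn_eq:
  fixes f :: "'a \<Rightarrow> real"
  assumes "(f \<longlongrightarrow> l) F" "l \<noteq> 0"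
  shows "\<forall>\<^sub>F x in F. sgn (f x) = sgn l"
proof (cases "0 < l")
  case True
  with order_tendstoD(1)[OF assms(1), of 0] show ?thesis
    by (auto elim: eventually_mono)
next
  case False
  with assms(2) have "l < 0"
    by simp
  with order_tendstoD(2)[OF assms(1), of 0] show ?thesis
    by (auto elim: eventually_mono)
qed

lemma no_local_max_at_upward_kink:
  fixes f P B :: "real \<Rightarrow> real"
  assumes P: "(P has_real_derivative P') (at q)" and B: "isCont B q" "0 < B q"
    and kink: "\<forall>\<^sub>F x in at q. f x = P x + \<bar>x - q\<bar> * B x" "f q = P q"
    and max: "\<forall>\<^sub>F x in at q. f x \<le> f q"
  shows False
proof -
  have "((\<lambda>x. (P x - P q) / (x - q)) \<longlongrightarrow> P') (at q)"
    using P by (simp add: has_field_derivative_iff)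
  then have lim_left: "((\<lambda>x. (P x - P q) / (x - q)) \<longlongrightarrow> P') (at_left q)"
    and lim_right: "((\<lambda>x. (P x - P q) / (x - q)) \<longlongrightarrow> P') (at_right q)"
    by (simp_all add: filterlim_at_split)
  have "(B \<longlongrightarrow> B q) (at q)"
    using B(1) by (simp add: isCont_def)
  then have B_left: "(B \<longlongrightarrow> B q) (at_left q)" and B_right: "(B \<longlongrightarrow> B q) (at_right q)"
    by (simp_all add: filterlim_at_split)
  have "\<forall>\<^sub>F x in at q. P x - P q \<le> - \<bar>x - q\<bar> * B x"
    using kink(1) max by eventually_elim (use kink(2) in simp)
  then have kink_left: "\<forall>\<^sub>F x in at_left q. P x - P q \<le> - \<bar>x - q\<bar> * B x"
    and kink_right: "\<forall>\<^sub>F x in at_right q. P x - P q \<le> - \<bar>x - q\<bar> * B x"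
    by (simp_all add: eventually_at_split)
  have "\<forall>\<^sub>F x in at_right q. (P x - P q) / (x - q) \<le> - B x"
    using kink_right eventually_at_right_less[of q]
    by eventually_elim (simp add: divide_le_eq algebra_simps)
  then have "P' \<le> - B q"
    by (rule tendsto_le[OF _ tendsto_minus[OF B_right] lim_right, rotated]) simp
  moreover have "\<forall>\<^sub>F x in at_left q. B x \<le> (P x - P q) / (x - q)"
    using kink_left eventually_at_left_real[of "q - 1" q, simplified]
    by eventually_elim (simp add: le_divide_eq algebra_simps)
  then have "B q \<le> P'"
    by (rule tendsto_le[OF _ lim_left B_left, rotated]) simp
  ultimately show False
    using B(2) by simp
qed

lemma max_point_not_node:
  assumes q: "0 < q" "q < 1" and qmax: "D n a q = maxD n a" and k: "k \<le> n"
  shows "a k \<noteq> q"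
proof
  assume node: "a k = q"
  define P where "P x = (\<Sum>j\<le>n. Bernstein n j x * (x - a j) * sgn (q - a j))" for x
  define B where "B x = (\<Sum>j\<in>{j\<in>{..n}. a j = q}. Bernstein n j x)" for x
  have split: "D n a x = P x + \<bar>x - q\<bar> * B x"
    if sgn_eq: "\<forall>j\<in>{..n}. a j \<noteq> q \<longrightarrow> sgn (x - a j) = sgn (q - a j)" for x
  proof -
    have "Bernstein n j x * \<bar>x - a j\<bar>
        = Bernstein n j x * (x - a j) * sgn (q - a j)
          + \<bar>x - q\<bar> * (if a j = q then Bernstein n j x else 0)"
      if "j \<le> n" for j
      using abs_sgn[of "x - a j"] sgn_eq that by (cases "a j = q") auto
    then show ?thesis
      unfolding D_Bernstein P_def B_def sum.inter_filter[OF finite_atMost] sum_distrib_left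
        sum.distrib[symmetric]
      by (intro sum.cong) auto
  qed
  have "\<forall>\<^sub>F x in at q. \<forall>j\<in>{..n}. a j \<noteq> q \<longrightarrow> sgn (x - a j) = sgn (q - a j)"
  proof (intro eventually_ball_finite ballI)
    fix j
    have "((\<lambda>x. x - a j) \<longlongrightarrow> q - a j) (at q)"
      by (intro tendsto_intros)
    then show "\<forall>\<^sub>F x in at q. a j \<noteq> q \<longrightarrow> sgn (x - a j) = sgn (q - a j)"
      by (cases "a j = q") (auto dest: eventually_sgn_eq elim: eventually_mono)
  qed simp
  then have "\<forall>\<^sub>F x in at q. D n a x = P x + \<bar>x - q\<bar> * B x"
    by (auto elim: eventually_mono intro: split)
  moreover have "D n a q = P q"
    using split[of q] by simp
  moreover have "\<forall>\<^sub>F x in at q. D n a x \<le> D n a q"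
    using eventually_at_in_open'[of "{0<..<1}" q] q
    by (auto simp: qmax elim!: eventually_mono intro: D_le_maxD)
  moreover have "P differentiable (at q)"
    unfolding P_def Bernstein_def by (intro derivative_intros) auto
  then obtain P' where "(P has_real_derivative P') (at q)"
    by (auto simp: real_differentiable_def)
  moreover have "isCont B q"
    unfolding B_def Bernstein_def by (intro continuous_intros)
  moreover have "0 < B q"
    unfolding B_def using node k Bernstein_pos[OF q] Bernstein_nonneg q
    by (intro sum_pos2[of _ k]) auto
  ultimately show False
    using no_local_max_at_upward_kink by blast
qed

text \<open>The right derivative at \<open>d = 0\<close> of \<open>d \<mapsto> D n (\<lambda>k. a k + d * t k) q\<close>,
  valid when \<open>q\<close> is none of the nodes \<open>a k\<close>.\<close>
definition D_slope :: "nat \<Rightarrow> (nat \<Rightarrow> real) \<Rightarrow> (nat \<Rightarrow> real) \<Rightarrow> real \<Rightarrow> real" where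
  "D_slope n a t q = (\<Sum>k\<le>n. Bernstein n k q * t k * sgn (a k - q))"

lemma D_slope_add_scaled:
  "D_slope n a (\<lambda>k. u k + c * v k) q = D_slope n a u q + c * D_slope n a v q"
  by (simp add: D_slope_def sum.distrib sum_distrib_left algebra_simps)

lemma descent_at_non_node:
  assumes nodes: "\<forall>k\<le>n. a k \<noteq> q" and slope: "D_slope n a t q < 0"
  shows "\<exists>d>0. D n (\<lambda>k. a k + d * t k) q < D n a q"
proof -
  have "\<forall>\<^sub>F d in at_right 0. \<forall>k\<in>{..n}. sgn (a k + d * t k - q) = sgn (a k - q)"
  proof (intro eventually_ball_finite ballI)
    fix k
    assume "k \<in> {..n}"
    have "((\<lambda>d. a k + d * t k - q) \<longlongrightarrow> a k + 0 * t k - q) (at_right 0)"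
      by (intro tendsto_intros)
    then show "\<forall>\<^sub>F d in at_right 0. sgn (a k + d * t k - q) = sgn (a k - q)"
      using nodes \<open>k \<in> {..n}\<close> by (intro eventually_sgn_eq) auto
  qed simp
  with eventually_at_right_less have "\<forall>\<^sub>F d in at_right 0. 0 < d \<and> (\<forall>k\<in>{..n}. sgn (a k + d * t k - q) = sgn (a k - q))"
    by (rule eventually_conj)
  then obtain d where d: "0 < d" "\<forall>k\<in>{..n}. sgn (a k + d * t k - q) = sgn (a k - q)"
    using eventually_happens'[of "at_right (0::real)"] by auto
  have "Bernstein n k q * \<bar>q - (a k + d * t k)\<bar>
      = Bernstein n k q * \<bar>q - a k\<bar> + d * (Bernstein n k q * t k * sgn (a k - q))"
    if "k \<le> n" for k
  proof -
    have "sgn (a k + d * t k - q) = sgn (a k - q)"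
      using d(2) that by simp
    then have "\<bar>q - (a k + d * t k)\<bar> = (a k + d * t k - q) * sgn (a k - q)"
      by (metis abs_minus_commute abs_sgn)
    moreover have "\<bar>q - a k\<bar> = (a k - q) * sgn (a k - q)"
      by (metis abs_minus_commute abs_sgn)
    ultimately show ?thesis
      by (simp only:) (simp add: algebra_simps)
  qed
  then have "D n (\<lambda>k. a k + d * t k) q = D n a q + d * D_slope n a t q"
    unfolding D_Bernstein D_slope_def sum_distrib_left sum.distrib[symmetric]
    by (intro sum.cong) auto
  with d(1) slope show ?thesis
    by (intro exI[of _ d]) (simp add: mult_pos_neg)
qed

lemma descent_at_0:
  assumes "0 < a 0" "t 0 < 0"
  shows "\<exists>d>0. D n (\<lambda>k. a k + d * t k) 0 < D n a 0"
  using assms by (intro exI[of _ "- a 0 / t 0"]) (simp add: D_at_0 divide_pos_neg)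

lemma descent_at_1:
  assumes "a n < 1" "0 < t n"
  shows "\<exists>d>0. D n (\<lambda>k. a k + d * t k) 1 < D n a 1"
  using assms by (intro exI[of _ "(1 - a n) / t n"]) (simp add: D_at_1)

lemma pair_slope_factor_le:
  fixes q \<theta> v :: real
  assumes "0 \<le> q" "q \<le> 1" "0 \<le> \<theta>" "\<theta> \<le> 1" "q \<noteq> \<theta>" "q \<noteq> v" "\<not> (\<theta> < q \<and> q < v)"
  shows "- \<theta> * (1 - q) * sgn (\<theta> - q) + (1 - \<theta>) * q * sgn (v - q) \<le> - \<bar>q - \<theta>\<bar>"
proof (cases "q < \<theta>")
  case True
  have "(1 - \<theta>) * q * sgn (v - q) \<le> (1 - \<theta>) * q"
    using assms by (cases "q < v") (auto simp: sgn_if mult_nonneg_nonneg)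
  with True show ?thesis
    by (simp add: algebra_simps)
next
  case False
  with assms(5-7) have "\<theta> < q" "v < q"
    by auto
  then show ?thesis
    by (simp add: algebra_simps)
qed

text \<open>Lowering \<open>a i\<close> and raising \<open>a (Suc i)\<close>, with weights chosen so that the slope at \<open>q\<close>
  is \<open>q ^ i * (1 - q) ^ (n - Suc i)\<close> times the left-hand side of \<open>pair_slope_factor_le\<close>.\<close>
definition pair_dir :: "nat \<Rightarrow> (nat \<Rightarrow> real) \<Rightarrow> nat \<Rightarrow> nat \<Rightarrow> real" where
  "pair_dir n a i k =
     (if k = i then - a i / real (n choose i) else 0)
   + (if k = Suc i then (1 - a i) / real (n choose Suc i) else 0)"

lemma D_slope_pair_dir_le:
  assumes "i < n" "0 \<le> q" "q \<le> 1" "0 \<le> a i" "a i \<le> 1" "q \<noteq> a i" "q \<noteq> a (Suc i)"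
    and "\<not> (a i < q \<and> q < a (Suc i))"
  shows "D_slope n a (pair_dir n a i) q \<le> - (q ^ i * (1 - q) ^ (n - Suc i) * \<bar>q - a i\<bar>)"
proof -
  define w where "w = q ^ i * (1 - q) ^ (n - Suc i)"
  have "D_slope n a (pair_dir n a i) q
      = Bernstein n i q * (- a i / real (n choose i)) * sgn (a i - q)
      + Bernstein n (Suc i) q * ((1 - a i) / real (n choose Suc i)) * sgn (a (Suc i) - q)"
  proof -
    have "D_slope n a (pair_dir n a i) q
        = (\<Sum>k\<le>n. (if k = i then Bernstein n i q * (- a i / real (n choose i)) * sgn (a i - q) else 0)
            + (if k = Suc i then Bernstein n (Suc i) q * ((1 - a i) / real (n choose Suc i))
                 * sgn (a (Suc i) - q) else 0))"
      unfolding D_slope_def pair_dir_def by (intro sum.cong) auto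
    then show ?thesis
      using assms(1) by (simp add: sum.distrib)
  qed
  also have "\<dots> = w * (- a i * (1 - q) * sgn (a i - q) + (1 - a i) * q * sgn (a (Suc i) - q))"
  proof -
    have "n - i = Suc (n - Suc i)"
      using assms(1) by simp
    then show ?thesis
      using assms(1) by (simp add: Bernstein_def w_def field_simps)
  qed
  also have "\<dots> \<le> w * - \<bar>q - a i\<bar>"
    using assms by (intro mult_left_mono pair_slope_factor_le) (auto simp: w_def)
  finally show ?thesis
    by (simp add: w_def)
qed

definition end_dir :: "nat \<Rightarrow> bool \<Rightarrow> bool \<Rightarrow> nat \<Rightarrow> real" where
  "end_dir n b0 b1 k = (if k = 0 then - of_bool b0 else 0) + (if k = n then of_bool b1 else 0)"

lemma D_slope_end_dir:
  assumes "1 \<le> n"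
  shows "D_slope n a (end_dir n b0 b1) q
       = of_bool b1 * q ^ n * sgn (a n - q) - of_bool b0 * (1 - q) ^ n * sgn (a 0 - q)"
proof -
  have "D_slope n a (end_dir n b0 b1) q
      = (\<Sum>k\<le>n. (if k = n then Bernstein n n q * of_bool b1 * sgn (a n - q) else 0)
          - (if k = 0 then Bernstein n 0 q * of_bool b0 * sgn (a 0 - q) else 0))"
    unfolding D_slope_def end_dir_def using assms by (intro sum.cong) auto
  then show ?thesis
    by (simp add: sum_subtractf Bernstein_def)
qed

lemma abs_of_bool_mult_sgn_le: "0 \<le> x \<Longrightarrow> \<bar>of_bool b * x * sgn (y :: real)\<bar> \<le> x"
  by (cases b) (auto simp: abs_mult sgn_if)

lemma D_slope_end_dir_near_0:
  assumes "1 \<le> n" "0 \<le> q" "q < 1/2" "q < a 0"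
  shows "D_slope n a (end_dir n True b1) q < 0"
proof -
  have "q ^ n < (1 - q) ^ n"
    using assms by (intro power_strict_mono) auto
  with assms abs_of_bool_mult_sgn_le[of "q ^ n" b1 "a n - q"] show ?thesis
    by (simp add: D_slope_end_dir abs_le_iff)
qed

lemma D_slope_end_dir_near_1:
  assumes "1 \<le> n" "1/2 < q" "q \<le> 1" "a n < q"
  shows "D_slope n a (end_dir n b0 True) q < 0"
proof -
  have "(1 - q) ^ n < q ^ n"
    using assms by (intro power_strict_mono) auto
  with assms abs_of_bool_mult_sgn_le[of "(1 - q) ^ n" b0 "a 0 - q"] show ?thesis
    by (simp add: D_slope_end_dir abs_le_iff)
qed

lemma D_slope_end_dir_le_2:
  assumes "1 \<le> n" "0 \<le> q" "q \<le> 1"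
  shows "D_slope n a (end_dir n b0 b1) q \<le> 2"
proof -
  have "q ^ n \<le> 1" "(1 - q) ^ n \<le> 1"
    using assms by (simp_all add: power_le_one)
  with assms abs_of_bool_mult_sgn_le[of "q ^ n" b1 "a n - q"]
    abs_of_bool_mult_sgn_le[of "(1 - q) ^ n" b0 "a 0 - q"] show ?thesis
    by (simp add: D_slope_end_dir abs_le_iff)
qed

lemma max_points_near_0:
  assumes "0 \<le> a 0"
  obtains \<alpha> where "0 < \<alpha>" "\<alpha> \<le> 1/2"
    "\<And>q. q \<in> maxset n a \<Longrightarrow> q < \<alpha> \<Longrightarrow> 0 \<in> maxset n a \<and> q < a 0"
proof (cases "0 \<in> maxset n a")
  case True
  then have "a 0 = maxD n a"
    using assms by (simp add: maxset_def D_at_0)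
  with True maxD_pos[of n a] show ?thesis
    by (intro that[of "min (a 0) (1/2)"]) auto
next
  case False
  then obtain e where "0 < e" "\<forall>q\<in>maxset n a. e \<le> dist 0 q"
    using separate_point_closed[OF closed_maxset] by blast
  then have "\<not> (q \<in> maxset n a \<and> q < e)" for q
    by (auto simp: maxset_def dist_real_def)
  then show ?thesis
    by (intro that[of "min e (1/2)"]) (use \<open>0 < e\<close> in auto)
qed

lemma max_points_near_1:
  assumes "a n \<le> 1"
  obtains \<beta> where "1/2 \<le> \<beta>" "\<beta> < 1"
    "\<And>q. q \<in> maxset n a \<Longrightarrow> \<beta> < q \<Longrightarrow> 1 \<in> maxset n a \<and> a n < q"
proof (cases "1 \<in> maxset n a")
  case True
  then have "1 - a n = maxD n a"
    using assms by (simp add: maxset_def D_at_1)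
  with True maxD_pos[of n a] show ?thesis
    by (intro that[of "max (a n) (1/2)"]) auto
next
  case False
  then obtain e where "0 < e" "\<forall>q\<in>maxset n a. e \<le> dist 1 q"
    using separate_point_closed[OF closed_maxset] by blast
  then have "\<not> (q \<in> maxset n a \<and> 1 - e < q)" for q
    by (auto simp: maxset_def dist_real_def)
  then show ?thesis
    by (intro that[of "max (1 - e) (1/2)"]) (use \<open>0 < e\<close> in auto)
qed

lemma compact_pos_lower_bound:
  fixes g :: "'a::topological_space \<Rightarrow> real"
  assumes "compact K" "continuous_on K g" "\<And>x. x \<in> K \<Longrightarrow> 0 < g x"
  obtains c where "0 < c" "\<And>x. x \<in> K \<Longrightarrow> c \<le> g x"
proof (cases "K = {}")
  case False
  then obtain x0 where "x0 \<in> K" "\<And>x. x \<in> K \<Longrightarrow> g x0 \<le> g x"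
    using continuous_attains_inf[OF assms(1) False assms(2)] by blast
  with assms(3) show ?thesis
    using that by blast
qed (rule that[of 1], auto)

lemma pair_dir_slope_uniformly_negative:
  assumes i: "i < n" and box: "\<forall>k\<le>n. a k \<in> {0..1}"
    and gap: "maxset n a \<inter> {a i<..<a (Suc i)} = {}" and "0 < \<alpha>" "\<beta> < 1"
  obtains c where "0 < c"
    "\<And>q. q \<in> maxset n a \<Longrightarrow> \<alpha> \<le> q \<Longrightarrow> q \<le> \<beta> \<Longrightarrow> D_slope n a (pair_dir n a i) q \<le> - c"
proof -
  define K where "K = maxset n a \<inter> {\<alpha>..\<beta>}"
  have K: "0 < q" "q < 1" "D n a q = maxD n a" "\<not> (a i < q \<and> q < a (Suc i))" if "q \<in> K" for q
    using that gap \<open>0 < \<alpha>\<close> \<open>\<beta> < 1\<close> by (auto simp: K_def maxset_def)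
  have "compact K"
    unfolding K_def using closed_maxset by (intro closed_Int_compact) auto
  moreover have "continuous_on K (\<lambda>q. q ^ i * (1 - q) ^ (n - Suc i) * \<bar>q - a i\<bar>)"
    by (intro continuous_intros)
  moreover have "0 < q ^ i * (1 - q) ^ (n - Suc i) * \<bar>q - a i\<bar>" if "q \<in> K" for q
    using K[OF that] max_point_not_node[OF K(1-3)[OF that], of i] i by auto
  ultimately obtain c where c: "0 < c" "\<And>q. q \<in> K \<Longrightarrow> c \<le> q ^ i * (1 - q) ^ (n - Suc i) * \<bar>q - a i\<bar>"
    by (rule compact_pos_lower_bound) auto
  show thesis
  proof (rule that[OF c(1)])
    fix q
    assume "q \<in> maxset n a" "\<alpha> \<le> q" "q \<le> \<beta>"
    then have "q \<in> K"
      by (simp add: K_def)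
    moreover have "a i \<noteq> q" "a (Suc i) \<noteq> q"
      using max_point_not_node[OF K(1-3)[OF \<open>q \<in> K\<close>], of i]
        max_point_not_node[OF K(1-3)[OF \<open>q \<in> K\<close>], of "Suc i"] i by auto
    ultimately have "D_slope n a (pair_dir n a i) q \<le> - (q ^ i * (1 - q) ^ (n - Suc i) * \<bar>q - a i\<bar>)"
      using K[OF \<open>q \<in> K\<close>] i box by (intro D_slope_pair_dir_le) auto
    with c(2)[OF \<open>q \<in> K\<close>] show "D_slope n a (pair_dir n a i) q \<le> - c"
      by linarith
  qed
qed

text \<open>The endpoint correction is scaled by \<open>c / 4\<close> so that on \<open>[\<alpha>, \<beta>]\<close> it cannot undo the
  slope \<open>- c\<close> of the pair direction, while near \<open>0\<close> and \<open>1\<close> it supplies the negative slope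
  that the pair direction, which only gives \<open>\<le> 0\<close> there, may lack.\<close>
definition gap_dir :: "nat \<Rightarrow> (nat \<Rightarrow> real) \<Rightarrow> nat \<Rightarrow> real \<Rightarrow> nat \<Rightarrow> real" where
  "gap_dir n a i c k = pair_dir n a i k + c / 4 * end_dir n (0 \<in> maxset n a) (1 \<in> maxset n a) k"

lemma D_slope_gap_dir_neg:
  assumes n: "1 \<le> n" and box: "\<forall>k\<le>n. a k \<in> {0..1}" and i: "i < n"
    and gap: "maxset n a \<inter> {a i<..<a (Suc i)} = {}"
    and \<alpha>: "\<alpha> \<le> 1/2" "\<And>q. q \<in> maxset n a \<Longrightarrow> q < \<alpha> \<Longrightarrow> 0 \<in> maxset n a \<and> q < a 0"
    and \<beta>: "1/2 \<le> \<beta>" "\<And>q. q \<in> maxset n a \<Longrightarrow> \<beta> < q \<Longrightarrow> 1 \<in> maxset n a \<and> a n < q"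
    and c: "0 < c"
      "\<And>q. q \<in> maxset n a \<Longrightarrow> \<alpha> \<le> q \<Longrightarrow> q \<le> \<beta> \<Longrightarrow> D_slope n a (pair_dir n a i) q \<le> - c"
    and q: "q \<in> maxset n a" "0 < q" "q < 1"
  shows "D_slope n a (gap_dir n a i c) q < 0"
proof -
  have qmax: "D n a q = maxD n a"
    using q by (simp add: maxset_def)
  have "D_slope n a (pair_dir n a i) q \<le> - (q ^ i * (1 - q) ^ (n - Suc i) * \<bar>q - a i\<bar>)"
    using max_point_not_node[OF q(2,3) qmax, of i] max_point_not_node[OF q(2,3) qmax, of "Suc i"]
      q gap i box by (intro D_slope_pair_dir_le) auto
  also have "\<dots> \<le> 0"
    using q by simp
  finally have pair_le: "D_slope n a (pair_dir n a i) q \<le> 0" .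
  have slope: "D_slope n a (gap_dir n a i c) q
      = D_slope n a (pair_dir n a i) q
        + c / 4 * D_slope n a (end_dir n (0 \<in> maxset n a) (1 \<in> maxset n a)) q"
    unfolding gap_dir_def by (rule D_slope_add_scaled)
  consider "q < \<alpha>" | "\<beta> < q" | "\<alpha> \<le> q" "q \<le> \<beta>"
    by linarith
  then show ?thesis
  proof cases
    case 1
    with \<alpha> q n have "D_slope n a (end_dir n (0 \<in> maxset n a) (1 \<in> maxset n a)) q < 0"
      using D_slope_end_dir_near_0[of n q a] by auto
    with pair_le c(1) slope show ?thesis
      by (simp add: add_nonpos_neg mult_pos_neg)
  next
    case 2
    with \<beta> q n have "D_slope n a (end_dir n (0 \<in> maxset n a) (1 \<in> maxset n a)) q < 0"
      using D_slope_end_dir_near_1[of n q a] by auto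
    with pair_le c(1) slope show ?thesis
      by (simp add: add_nonpos_neg mult_pos_neg)
  next
    case 3
    have "c / 4 * D_slope n a (end_dir n (0 \<in> maxset n a) (1 \<in> maxset n a)) q \<le> c / 4 * 2"
      using c(1) q n by (intro mult_left_mono D_slope_end_dir_le_2) auto
    with c(1) c(2)[OF q(1) 3] slope show ?thesis
      by linarith
  qed
qed

lemma descent_direction_if_gap:
  assumes n: "1 \<le> n" and box: "\<forall>k\<le>n. a k \<in> {0..1}" and i: "i < n"
    and gap: "maxset n a \<inter> {a i<..<a (Suc i)} = {}"
  obtains t where "\<forall>q\<in>maxset n a. \<exists>d>0. D n (\<lambda>k. a k + d * t k) q < maxD n a"
proof -
  obtain \<alpha> where \<alpha>: "0 < \<alpha>" "\<alpha> \<le> 1/2"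
    "\<And>q. q \<in> maxset n a \<Longrightarrow> q < \<alpha> \<Longrightarrow> 0 \<in> maxset n a \<and> q < a 0"
    using max_points_near_0[of a n] box by auto
  obtain \<beta> where \<beta>: "1/2 \<le> \<beta>" "\<beta> < 1"
    "\<And>q. q \<in> maxset n a \<Longrightarrow> \<beta> < q \<Longrightarrow> 1 \<in> maxset n a \<and> a n < q"
    using max_points_near_1[of a n] box by auto
  obtain c where c: "0 < c"
    "\<And>q. q \<in> maxset n a \<Longrightarrow> \<alpha> \<le> q \<Longrightarrow> q \<le> \<beta> \<Longrightarrow> D_slope n a (pair_dir n a i) q \<le> - c"
    using pair_dir_slope_uniformly_negative[OF i box gap \<alpha>(1) \<beta>(2)] by blast
  have ai: "0 \<le> a i" "a i \<le> 1"
    using box i by auto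
  have "\<exists>d>0. D n (\<lambda>k. a k + d * gap_dir n a i c k) q < maxD n a" if q: "q \<in> maxset n a" for q
  proof -
    have q01: "0 \<le> q" "q \<le> 1" and qmax: "D n a q = maxD n a"
      using q by (auto simp: maxset_def)
    consider "q = 0" | "q = 1" | "0 < q" "q < 1"
      using q01 by fastforce
    then show ?thesis
    proof cases
      case 1
      have "0 < a 0"
        using qmax box maxD_pos[of n a] by (simp add: 1 D_at_0)
      moreover have "gap_dir n a i c 0 < 0"
        using q 1 n i ai c(1) by (auto simp: gap_dir_def pair_dir_def end_dir_def)
      ultimately show ?thesis
        using descent_at_0[of a "gap_dir n a i c" n] qmax 1 by simp
    next
      case 2
      have "a n < 1"
        using qmax box maxD_pos[of n a] by (simp add: 2 D_at_1)
      moreover have "0 < gap_dir n a i c n"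
        using q 2 n i ai c(1) by (auto simp: gap_dir_def pair_dir_def end_dir_def)
      ultimately show ?thesis
        using descent_at_1[of a n "gap_dir n a i c"] qmax 2 by simp
    next
      case 3
      then have "\<forall>k\<le>n. a k \<noteq> q"
        using max_point_not_node[OF _ _ qmax] by blast
      from descent_at_non_node[OF this D_slope_gap_dir_neg[OF n box i gap \<alpha>(2,3) \<beta>(1,3) c q 3]]
      show ?thesis
        using qmax by simp
    qed
  qed
  then show thesis
    using that by blast
qed

theorem theorem2p2:
  fixes n :: nat and a :: "nat \<Rightarrow> real"
  assumes "n \<ge> 1"
    and "\<forall>k\<le>n. a k \<in> {0..1}"
    and "\<forall>x :: nat \<Rightarrow> real. (\<forall>k\<le>n. x k \<in> {0..1}) \<longrightarrow> maxD n a \<le> maxD n x"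
  shows "(\<forall>i<n. a i < a (Suc i)) \<and> (\<forall>i<n. maxset n a \<inter> {a i<..<a (Suc i)} \<noteq> {})"
proof -
  have gap_hit: "maxset n a \<inter> {a i<..<a (Suc i)} \<noteq> {}" if i: "i < n" for i
  proof
    assume "maxset n a \<inter> {a i<..<a (Suc i)} = {}"
    then obtain t where "\<forall>q\<in>maxset n a. \<exists>d>0. D n (\<lambda>k. a k + d * t k) q < maxD n a"
      using descent_direction_if_gap[OF assms(1,2) i] by blast
    then obtain x where "\<forall>k\<le>n. x k \<in> {0..1}" "maxD n x < maxD n a"
      by (rule not_minimal_if_descent)
    with assms(3) show False
      by fastforce
  qed
  then have "a i < a (Suc i)" if "i < n" for i
    using that by fastforce
  with gap_hit show ?thesis
    by blast
qed

end
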